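(* Let $T$, $\mathcal{S}=\mathcal{S}_+\cup\mathcal{S}_-$, $\Psi$, $U$, $\lambda,\mu$, $P_\lambda,P_\mu$ and $W$ be as in the context. Consider the discrete-time QBD with phase space $\mathcal{S}$ and transition blocks $$C_{-1}=\begin{bmatrix}0&(I-\mu^{-1}T_{++})^{-1}P_{\mu+-}\\0&W\end{bmatrix},\quad C_0=\begin{bmatrix}0&(I-\mu^{-1}T_{++})^{-1}P_{\lambda+-}\\0&0\end{bmatrix},\quad C_1=\begin{bmatrix}(I-\mu^{-1}T_{++})^{-1}P_{\lambda++}&0\\0&0\end{bmatrix}.$$ Then its $\mathcal{G}$-matrix is $$\mathcal{G}_C=\begin{bmatrix}0&\Psi\\0&W\end{bmatrix}.$$
   Context: $T$ is the generator of a continuous-time Markov chain on a finite set $\mathcal{S}=\mathcal{S}_+\cup\mathcal{S}_-$ (disjoint, both nonempty), partitioned into blocks $T_{++},T_{+-},T_{-+},T_{--}$ according to $\mathcal{S}_\pm$. $\Psi$ is the minimal nonnegative solution of $T_{+-}+\Psi T_{--}+T_{++}\Psi+\Psi T_{-+}\Psi=0$ (the first-return probability matrix of the unit-rate fluid queue with phase generator $T$, rates $+1$ on $\mathcal{S}_+$ and $-1$ on $\mathcal{S}_-$), and $U:=T_{--}+T_{-+}\Psi$. $\lambda,\mu>0$ satisfy $\lambda,\mu\ge\max_i|T_{ii}|$; $P_\lambda:=I+\lambda^{-1}T$, $P_\mu:=I+\mu^{-1}T$ with blocks $P_{\lambda++}$ etc.; $W:=(I+\mu^{-1}U)(I-\lambda^{-1}U)^{-1}$.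 A discrete-time quasi-birth-death process (QBD) with transition blocks $L_{-1},L_0,L_1$ is a Markov chain $\{(Y_n,\kappa_n)\}$ on $\mathbb{Z}\times\mathcal{S}$ with $\mathbb{P}[Y_n=k+d,\kappa_n=j\mid Y_{n-1}=k,\kappa_{n-1}=i]=(L_d)_{ij}$ for $d\in\{-1,0,1\}$. Its $\mathcal{G}$-matrix has entries $\mathcal{G}_{ij}=\mathbb{P}[\theta<\infty,\kappa_\theta=j\mid Y_0=k,\kappa_0=i]$ with $\theta=\inf\{n>0:Y_n=k-1\}$. Matrices are partitioned into blocks according to $\mathcal{S}_+,\mathcal{S}_-$. *)

theory Defs
  imports "HOL-Analysis.Analysis"
begin

text \<open>Phase space S = S+ \<union> S-, realised as the sum type 'p + 'm
  (Inl = S+, Inr = S-). Matrices are HOL-Analysis matrices real^cols^rows.\<close>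

definition blk_pp :: "real^('p::finite+'m::finite)^('p+'m) \<Rightarrow> real^'p^'p" where
  "blk_pp A = (\<chi> a b. A $ Inl a $ Inl b)"
definition blk_pm :: "real^('p::finite+'m::finite)^('p+'m) \<Rightarrow> real^'m^'p" where
  "blk_pm A = (\<chi> a b. A $ Inl a $ Inr b)"
definition blk_mp :: "real^('p::finite+'m::finite)^('p+'m) \<Rightarrow> real^'p^'m" where
  "blk_mp A = (\<chi> a b. A $ Inr a $ Inl b)"
definition blk_mm :: "real^('p::finite+'m::finite)^('p+'m) \<Rightarrow> real^'m^'m" where
  "blk_mm A = (\<chi> a b. A $ Inr a $ Inr b)"

definition block_mat :: "real^'p^'p \<Rightarrow> real^'m^'p \<Rightarrow> real^'p^'m \<Rightarrow> real^'m^'m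
    \<Rightarrow> real^('p::finite+'m::finite)^('p+'m)" where
  "block_mat A B C D = (\<chi> i j. (case i of
       Inl a \<Rightarrow> (case j of Inl b \<Rightarrow> A $ a $ b | Inr b \<Rightarrow> B $ a $ b)
     | Inr a \<Rightarrow> (case j of Inl b \<Rightarrow> C $ a $ b | Inr b \<Rightarrow> D $ a $ b)))"

definition is_generator :: "real^'s^'s \<Rightarrow> bool" where
  "is_generator T \<longleftrightarrow> (\<forall>i j. i \<noteq> j \<longrightarrow> T $ i $ j \<ge> 0) \<and> (\<forall>i. (\<Sum>j\<in>UNIV. T $ i $ j) = 0)"

definition nonneg_mat :: "real^'c^'r \<Rightarrow> bool" where
  "nonneg_mat X \<longleftrightarrow> (\<forall>i j. X $ i $ j \<ge> 0)"

definition riccati :: "real^('p::finite+'m::finite)^('p+'m) \<Rightarrow> real^'m^'p \<Rightarrow> bool" where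
  "riccati T X \<longleftrightarrow>
     blk_pm T + X ** blk_mm T + blk_pp T ** X + X ** blk_mp T ** X = 0"

definition is_min_nonneg_sol :: "real^('p::finite+'m::finite)^('p+'m) \<Rightarrow> real^'m^'p \<Rightarrow> bool" where
  "is_min_nonneg_sol T Psi \<longleftrightarrow> nonneg_mat Psi \<and> riccati T Psi \<and>
     (\<forall>X. nonneg_mat X \<and> riccati T X \<longrightarrow> (\<forall>i j. Psi $ i $ j \<le> X $ i $ j))"

definition qbd_step :: "real^'s^'s \<Rightarrow> real^'s^'s \<Rightarrow> real^'s^'s \<Rightarrow> int \<Rightarrow> real^'s^'s" where
  "qbd_step Lm L0 L1 d = (if d = -1 then Lm else if d = 0 then L0 else if d = 1 then L1 else 0)"

text \<open>taboo L n i k j: probability that, starting in (level 0, phase i), the QBD is in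
  (level k, phase j) at time n, with levels \<ge> 0 at all times 0..n (k is the level offset).\<close>
fun qbd_taboo :: "(int \<Rightarrow> real^'s^'s) \<Rightarrow> nat \<Rightarrow> 's::finite \<Rightarrow> nat \<Rightarrow> 's \<Rightarrow> real" where
  "qbd_taboo L 0 i k j = (if k = 0 \<and> j = i then 1 else 0)"
| "qbd_taboo L (Suc n) i k j =
     (\<Sum>k'\<le>n. \<Sum>j'\<in>UNIV. qbd_taboo L n i k' j' * (L (int k - int k')) $ j' $ j)"

text \<open>P[theta = n+1, kappa_theta = j | Y_0 = level, kappa_0 = i].\<close>
definition qbd_first_passage :: "(int \<Rightarrow> real^'s^'s) \<Rightarrow> nat \<Rightarrow> 's::finite \<Rightarrow> 's \<Rightarrow> real" where
  "qbd_first_passage L n i j = (\<Sum>j'\<in>UNIV. qbd_taboo L n i 0 j' * (L (-1)) $ j' $ j)"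

definition qbd_G :: "real^'s^'s \<Rightarrow> real^'s^'s \<Rightarrow> real^'s^'s \<Rightarrow> real^'s^'s::finite" where
  "qbd_G Lm L0 L1 = (\<chi> i j. \<Sum>n. qbd_first_passage (qbd_step Lm L0 L1) n i j)"

end

theory Submission
  imports Defs
begin

text \<open>
  From a phase in \<open>S\<^sub>-\<close> the QBD can only move down, through \<open>W\<close>. From \<open>S\<^sub>+\<close> it
  climbs \<open>m\<close> levels with \<open>C\<^sub>1\<close>, enters \<open>S\<^sub>-\<close> with \<open>C\<^sub>0\<close> or \<open>C\<^sub>-\<^sub>1\<close> and then
  descends with \<open>W\<close>, so the \<open>S\<^sub>+ \<times> S\<^sub>-\<close> block of its G-matrix is
  \<open>\<Sum>\<^sub>m C\<^sub>1\<^sup>m (C\<^sub>-\<^sub>1 + C\<^sub>0 W) W\<^sup>m\<close>. The partial sums of this series are the iterates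
  from \<open>0\<close> of the monotone map \<open>X \<mapsto> C\<^sub>-\<^sub>1 + C\<^sub>0 W + C\<^sub>1 X W\<close>, whose fixed points
  are, after multiplying by \<open>I - T\<^sub>+\<^sub>+/\<mu>\<close> on the left and \<open>I - U/\<lambda>\<close> on the right, the
  solutions of \<open>T\<^sub>+\<^sub>- + X U + T\<^sub>+\<^sub>+ X = 0\<close>. \<open>\<Psi>\<close> is such a fixed point, so the
  iterates increase to a fixed point \<open>S \<le> \<Psi>\<close>. The Riccati residual of \<open>S\<close> is
  \<open>S T\<^sub>-\<^sub>+ (S - \<Psi>) \<le> 0\<close>, and \<open>\<Psi>\<close> lies below every nonnegative supersolution, being
  the limit of a monotone uniformised Riccati iteration; hence \<open>S = \<Psi>\<close>. The blocks
  and \<open>W\<close> are nonnegative because \<open>I - T\<^sub>+\<^sub>+/\<mu>\<close> and \<open>I - U/\<lambda>\<close> are Z-matrices with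
  positive row sums, the latter since \<open>\<Psi>\<close> is substochastic.
\<close>

section \<open>Nonnegative matrices\<close>

lemma matrix_le_iff: "(X :: real^'n^'m) \<le> Y \<longleftrightarrow> (\<forall>i j. X $ i $ j \<le> Y $ i $ j)"
  by (simp add: less_eq_vec_def)

lemma nonneg_mat_iff: "nonneg_mat X \<longleftrightarrow> 0 \<le> X"
  by (simp add: nonneg_mat_def matrix_le_iff)

lemma matrix_mult_entry: "(X ** Y) $ i $ j = (\<Sum>k\<in>UNIV. X $ i $ k * Y $ k $ j)"
  by (simp add: matrix_matrix_mult_def)

lemma matrix_vector_mult_entry: "(X *v v) $ i = (\<Sum>k\<in>UNIV. X $ i $ k * v $ k)"
  by (simp add: matrix_vector_mult_def)

lemma matrix_mult_nonneg:
  fixes X :: "real^'n::finite^'m" and Y :: "real^'k^'n"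
  shows "0 \<le> X \<Longrightarrow> 0 \<le> Y \<Longrightarrow> 0 \<le> X ** Y"
  by (auto simp: matrix_le_iff matrix_mult_entry intro!: sum_nonneg)

lemma matrix_mult_left_mono:
  fixes A :: "real^'n::finite^'m" and X :: "real^'k^'n"
  shows "0 \<le> A \<Longrightarrow> X \<le> Y \<Longrightarrow> A ** X \<le> A ** Y"
  by (auto simp: matrix_le_iff matrix_mult_entry intro!: sum_mono mult_left_mono)

lemma matrix_mult_right_mono:
  fixes B :: "real^'n^'m::finite" and X :: "real^'m^'k"
  shows "X \<le> Y \<Longrightarrow> 0 \<le> B \<Longrightarrow> X ** B \<le> Y ** B"
  by (auto simp: matrix_le_iff matrix_mult_entry intro!: sum_mono mult_right_mono)

lemma matrix_vector_mult_mono: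
  fixes A :: "real^'n::finite^'m"
  shows "0 \<le> A \<Longrightarrow> v \<le> w \<Longrightarrow> A *v v \<le> A *v w"
  by (auto simp: matrix_le_iff less_eq_vec_def matrix_vector_mult_entry
      intro!: sum_mono mult_left_mono)

lemma matrix_add_rdistrib: "(A + B) ** C = A ** C + B ** (C :: 'a::semiring_1^'k^'n)"
  by (simp add: vec_eq_iff matrix_mult_entry distrib_right sum.distrib)

lemma matrix_diff_ldistrib: "A ** (B - C) = A ** B - A ** (C :: 'a::ring_1^'k^'n)"
  by (simp add: vec_eq_iff matrix_mult_entry right_diff_distrib sum_subtractf)

lemma matrix_diff_rdistrib: "(A - B) ** C = A ** C - B ** (C :: 'a::ring_1^'k^'n)"
  by (simp add: vec_eq_iff matrix_mult_entry left_diff_distrib sum_subtractf)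

lemma matrix_mult_sum_left: "A ** sum f S = (\<Sum>x\<in>S. A ** f x)"
  by (induction S rule: infinite_finite_induct) (simp_all add: matrix_add_ldistrib)

lemma matrix_mult_sum_right: "sum f S ** A = (\<Sum>x\<in>S. f x ** A)"
  by (induction S rule: infinite_finite_induct) (simp_all add: matrix_add_rdistrib)

lemma matrix_inv_invertible:
  assumes "invertible A"
  shows matrix_inv_left: "matrix_inv A ** A = mat 1" and matrix_inv_right: "A ** matrix_inv A = mat 1"
  using someI_ex[OF assms[unfolded invertible_def]] by (auto simp: matrix_inv_def)

fun matrix_power :: "real^'n^'n \<Rightarrow> nat \<Rightarrow> real^'n^'n" where
  "matrix_power X 0 = mat 1"
| "matrix_power X (Suc k) = X ** matrix_power X k"

lemma matrix_power_Suc_right: "matrix_power X (Suc k) = matrix_power X k ** X"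
  by (induction k) (simp_all add: matrix_mul_assoc)

lemma matrix_power_nonneg: "0 \<le> X \<Longrightarrow> 0 \<le> matrix_power X k"
proof (induction k)
  case 0 show ?case by (simp add: matrix_le_iff mat_def)
next
  case (Suc k) then show ?case by (simp add: matrix_mult_nonneg)
qed

lemma Z_matrix_monotone:
  fixes N :: "real^'n^'n"
  assumes off: "\<And>i j. i \<noteq> j \<Longrightarrow> N $ i $ j \<le> 0" and rows: "\<And>i. 0 < (N *v 1) $ i"
    and Nx: "0 \<le> N *v x"
  shows "0 \<le> x"
proof -
  have "Min (range (($) x)) \<in> range (($) x)"
    by (rule Min_in) simp_all
  then obtain i0 where "x $ i0 = Min (range (($) x))"
    by (metis rangeE)
  then have i0: "\<And>j. x $ i0 \<le> x $ j"
    by simp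
  have "x $ i0 \<ge> 0"
  proof (rule ccontr)
    assume neg: "\<not> x $ i0 \<ge> 0"
    have "(N *v x) $ i0 = (\<Sum>j\<in>UNIV. N $ i0 $ j * x $ j)"
      by (simp add: matrix_vector_mult_entry)
    also have "\<dots> \<le> (\<Sum>j\<in>UNIV. N $ i0 $ j * x $ i0)"
    proof (rule sum_mono)
      show "N $ i0 $ j * x $ j \<le> N $ i0 $ j * x $ i0" for j
        by (cases "j = i0") (auto intro: mult_left_mono_neg off i0)
    qed
    also have "\<dots> = x $ i0 * (N *v 1) $ i0"
      by (simp add: matrix_vector_mult_entry sum_distrib_left mult.commute)
    also have "\<dots> < 0"
      using neg rows[of i0] by (simp add: mult_neg_pos)
    finally have "(N *v x) $ i0 < 0" .
    moreover have "0 \<le> (N *v x) $ i0"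
      using Nx by (simp add: less_eq_vec_def)
    ultimately show False by simp
  qed
  then show ?thesis
    using i0 by (auto simp: less_eq_vec_def intro: order.trans)
qed

lemma Z_matrix_inverse_nonneg:
  fixes N :: "real^'n^'n"
  assumes off: "\<And>i j. i \<noteq> j \<Longrightarrow> N $ i $ j \<le> 0" and rows: "\<And>i. 0 < (N *v 1) $ i"
  shows "invertible N" and "0 \<le> matrix_inv N"
proof -
  have "x = 0" if "N *v x = 0" for x
  proof -
    have "N *v (- x) = 0"
      using that by (simp add: vec_eq_iff matrix_vector_mult_entry sum_negf)
    then have "0 \<le> - x"
      using Z_matrix_monotone[OF off rows, of "- x"] by simp
    moreover have "0 \<le> x"
      using Z_matrix_monotone[OF off rows, of x] that by simp
    ultimately show "x = 0" by (simp add: antisym)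
  qed
  then show invN: "invertible N"
    by (simp add: invertible_left_inverse matrix_left_invertible_ker)
  have "0 \<le> matrix_inv N *v axis j 1" for j
  proof -
    have "N *v (matrix_inv N *v axis j 1) = axis j 1"
      by (simp add: matrix_vector_mul_assoc matrix_inv_right[OF invN])
    then show ?thesis
      using Z_matrix_monotone[OF off rows, of "matrix_inv N *v axis j 1"]
      by (simp add: less_eq_vec_def axis_def)
  qed
  then show "0 \<le> matrix_inv N"
    by (simp add: matrix_le_iff less_eq_vec_def matrix_vector_mult_entry axis_def
        if_distrib cong: if_cong)
qed

section \<open>Limits and monotone iteration\<close>

lemma tendsto_matrix_mult [tendsto_intros]:
  fixes X :: "'a \<Rightarrow> real^'k::finite^'m" and Y :: "'a \<Rightarrow> real^'n^'k"
  assumes "(X \<longlongrightarrow> A) F" "(Y \<longlongrightarrow> B) F"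
  shows "((\<lambda>x. X x ** Y x) \<longlongrightarrow> A ** B) F"
  unfolding matrix_matrix_mult_def by (intro tendsto_intros assms)

lemma tendsto_matrix_vector_mult [tendsto_intros]:
  fixes X :: "'a \<Rightarrow> real^'n::finite^'m"
  assumes "(X \<longlongrightarrow> A) F"
  shows "((\<lambda>x. X x *v v) \<longlongrightarrow> A *v v) F"
  unfolding matrix_vector_mult_def by (intro tendsto_intros assms)

lemma LIMSEQ_le_bound:
  fixes X :: "nat \<Rightarrow> 'a::ordered_euclidean_space"
  assumes "X \<longlonglongrightarrow> L" "\<And>k. X k \<le> B"
  shows "L \<le> B"
proof -
  have "L \<in> {..B}"
    by (rule Lim_in_closed_set[OF closed_eucl_atMost _ _ assms(1)]) (use assms(2) in auto)
  then show ?thesis by simp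
qed

lemma LIMSEQ_ge_bound:
  fixes X :: "nat \<Rightarrow> 'a::ordered_euclidean_space"
  assumes "X \<longlonglongrightarrow> L" "\<And>k. B \<le> X k"
  shows "B \<le> L"
proof -
  have "L \<in> {B..}"
    by (rule Lim_in_closed_set[OF closed_eucl_atLeast _ _ assms(1)]) (use assms(2) in auto)
  then show ?thesis by simp
qed

lemma incseq_matrix_convergent:
  fixes X :: "nat \<Rightarrow> real^'n^'m"
  assumes inc: "incseq X" and bound: "\<And>k. X k \<le> B"
  shows "convergent X"
proof -
  have "(\<lambda>k. X k $ i $ j) \<longlonglongrightarrow> (SUP k. X k $ i $ j)" for i j
  proof (rule LIMSEQ_incseq_SUP)
    show "bdd_above (range (\<lambda>k. X k $ i $ j))"
      using bound by (intro bdd_aboveI[of _ "B $ i $ j"]) (auto simp: matrix_le_iff)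
    show "incseq (\<lambda>k. X k $ i $ j)"
      using inc by (simp add: incseq_def matrix_le_iff)
  qed
  then have "X \<longlonglongrightarrow> (\<chi> i j. SUP k. X k $ i $ j)"
    by (intro vec_tendstoI) simp
  then show ?thesis
    by (rule convergentI)
qed

lemma iterates_from_zero:
  fixes f :: "'a::{order,zero} \<Rightarrow> 'a"
  assumes mono: "mono_on {0..} f" and f0: "0 \<le> f 0"
  shows iterates_nonneg: "0 \<le> (f ^^ k) 0"
    and iterates_incseq: "incseq (\<lambda>k. (f ^^ k) 0)"
    and iterates_le_prefixpoint: "0 \<le> Z \<Longrightarrow> f Z \<le> Z \<Longrightarrow> (f ^^ k) 0 \<le> Z"
proof -
  have step: "0 \<le> (f ^^ k) 0 \<and> (f ^^ k) 0 \<le> (f ^^ Suc k) 0" for k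
  proof (induction k)
    case 0 then show ?case using f0 by simp
  next
    case (Suc k) then show ?case
      using mono_onD[OF mono] order.trans by fastforce
  qed
  then show "0 \<le> (f ^^ k) 0" by blast
  show "incseq (\<lambda>k. (f ^^ k) 0)"
    using step by (intro incseq_SucI) blast
  show "(f ^^ k) 0 \<le> Z" if Z: "0 \<le> Z" "f Z \<le> Z"
  proof (induction k)
    case 0 show ?case using Z by simp
  next
    case (Suc k)
    have "f ((f ^^ k) 0) \<le> f Z"
      using Suc step Z by (intro mono_onD[OF mono]) auto
    then show ?case using Z by simp
  qed
qed

lemma iterates_converge_to_least_prefixpoint:
  fixes f :: "real^'n^'m \<Rightarrow> real^'n^'m"
  assumes mono: "mono_on {0..} f" and f0: "0 \<le> f 0"
    and cont: "\<And>X L. X \<longlonglongrightarrow> L \<Longrightarrow> (\<lambda>k. f (X k)) \<longlonglongrightarrow> f L"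
    and Y: "0 \<le> Y" "f Y \<le> Y"
  obtains L where "(\<lambda>k. (f ^^ k) 0) \<longlonglongrightarrow> L" "f L = L" "0 \<le> L"
    "\<And>Z. 0 \<le> Z \<Longrightarrow> f Z \<le> Z \<Longrightarrow> L \<le> Z"
proof -
  note it = iterates_from_zero[OF mono f0]
  obtain L where lim: "(\<lambda>k. (f ^^ k) 0) \<longlonglongrightarrow> L"
    using incseq_matrix_convergent[OF it(2) it(3)[OF Y]] by (auto simp: convergent_def)
  have "(\<lambda>k. f ((f ^^ k) 0)) \<longlonglongrightarrow> f L" by (rule cont[OF lim])
  moreover have "(\<lambda>k. f ((f ^^ k) 0)) \<longlonglongrightarrow> L"
    using LIMSEQ_Suc[OF lim] by simp
  ultimately have "f L = L" by (rule LIMSEQ_unique)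
  moreover have "0 \<le> L" by (rule LIMSEQ_ge_bound[OF lim it(1)])
  moreover have "L \<le> Z" if "0 \<le> Z" "f Z \<le> Z" for Z
    by (rule LIMSEQ_le_bound[OF lim it(3)[OF that]])
  ultimately show ?thesis using that lim by blast
qed

lemma nonneg_sums_of_pairs:
  fixes a :: "nat \<Rightarrow> real"
  assumes nonneg: "\<And>n. 0 \<le> a n" and pairs: "(\<lambda>m. a (2 * m) + a (2 * m + 1)) sums s"
  shows "a sums s"
proof -
  have even_sums: "(\<Sum>n<2 * N. a n) = (\<Sum>m<N. a (2 * m) + a (2 * m + 1))" for N
    by (induction N) (simp_all add: add.assoc)
  have "(\<Sum>n<K. a n) \<le> s" for K
  proof -
    have "(\<Sum>n<K. a n) \<le> (\<Sum>n<2 * K. a n)"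
      using nonneg by (intro sum_mono2) auto
    also have "\<dots> \<le> s"
      unfolding even_sums sums_unique[OF pairs]
      using pairs nonneg by (intro sum_le_suminf) (auto simp: sums_iff intro: add_nonneg_nonneg)
    finally show ?thesis .
  qed
  then have "summable a"
    using nonneg by (intro summableI_nonneg_bounded)
  then have "(\<lambda>N. \<Sum>n<2 * N. a n) \<longlonglongrightarrow> suminf a"
    using LIMSEQ_subseq_LIMSEQ[OF summable_LIMSEQ, of a "\<lambda>N. 2 * N"]
    by (simp add: strict_mono_def o_def)
  moreover have "(\<lambda>N. \<Sum>n<2 * N. a n) \<longlonglongrightarrow> s"
    using pairs unfolding even_sums sums_def .
  ultimately show ?thesis
    using \<open>summable a\<close> LIMSEQ_unique summable_sums by metis
qed

section \<open>Blocks and the Riccati equation\<close>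

lemma sum_UNIV_Plus:
  "(\<Sum>j\<in>UNIV. f j) = (\<Sum>a\<in>UNIV. f (Inl a)) + (\<Sum>b\<in>UNIV. f (Inr b))"
  for f :: "'a::finite + 'b::finite \<Rightarrow> 'c::comm_monoid_add"
proof -
  have "(\<Sum>j\<in>UNIV. f j) = (\<Sum>j\<in>UNIV <+> UNIV. f j)" by simp
  also have "\<dots> = (\<Sum>a\<in>UNIV. f (Inl a)) + (\<Sum>b\<in>UNIV. f (Inr b))"
    by (subst sum.Plus) (simp_all add: comp_def)
  finally show ?thesis .
qed

lemma block_mat_entries [simp]:
  "block_mat A B C D $ Inl a $ Inl b = A $ a $ b" "block_mat A B C D $ Inl a $ Inr e = B $ a $ e"
  "block_mat A B C D $ Inr e $ Inl b = C $ e $ b" "block_mat A B C D $ Inr e $ Inr f = D $ e $ f"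
  by (simp_all add: block_mat_def)

lemma blk_entries [simp]:
  "blk_pp X $ a $ b = X $ Inl a $ Inl b" "blk_pm X $ a $ e = X $ Inl a $ Inr e"
  "blk_mp X $ e $ b = X $ Inr e $ Inl b" "blk_mm X $ e $ f = X $ Inr e $ Inr f"
  by (simp_all add: blk_pp_def blk_pm_def blk_mp_def blk_mm_def)

lemma blk_add [simp]:
  "blk_pp (X + Y) = blk_pp X + blk_pp Y" "blk_pm (X + Y) = blk_pm X + blk_pm Y"
  "blk_mp (X + Y) = blk_mp X + blk_mp Y" "blk_mm (X + Y) = blk_mm X + blk_mm Y"
  by (simp_all add: vec_eq_iff)

lemma blk_scaleR [simp]:
  "blk_pp (c *\<^sub>R X) = c *\<^sub>R blk_pp X" "blk_pm (c *\<^sub>R X) = c *\<^sub>R blk_pm X"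
  "blk_mp (c *\<^sub>R X) = c *\<^sub>R blk_mp X" "blk_mm (c *\<^sub>R X) = c *\<^sub>R blk_mm X"
  by (simp_all add: vec_eq_iff)

lemma blk_mat_1 [simp]:
  "blk_pp (mat 1) = mat 1" "blk_pm (mat 1) = 0" "blk_mp (mat 1) = 0" "blk_mm (mat 1) = mat 1"
  by (simp_all add: vec_eq_iff mat_def)

lemma blk_nonneg:
  assumes "0 \<le> X"
  shows "0 \<le> blk_pp X" "0 \<le> blk_pm X" "0 \<le> blk_mp X" "0 \<le> blk_mm X"
  using assms by (simp_all add: matrix_le_iff)

lemma blk_row_sums:
  "(X *v 1) $ Inl a = (blk_pp X *v 1) $ a + (blk_pm X *v 1) $ a"
  "(X *v 1) $ Inr e = (blk_mp X *v 1) $ e + (blk_mm X *v 1) $ e"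
  by (simp_all add: matrix_vector_mult_entry sum_UNIV_Plus)

lemma stochastic_blk_row_sums:
  assumes "X *v 1 = 1"
  shows "blk_pp X *v 1 + blk_pm X *v 1 = 1" "blk_mp X *v 1 + blk_mm X *v 1 = 1"
  using assms by (simp_all add: vec_eq_iff blk_row_sums[symmetric])

lemma exists_uniformisation_rate: "\<exists>c>0. \<forall>i. \<bar>T $ i $ i\<bar> \<le> (c :: real)"
proof (intro exI conjI allI)
  show "0 < 1 + (\<Sum>i\<in>UNIV. \<bar>T $ i $ i\<bar>)"
    by (simp add: add_pos_nonneg sum_nonneg)
  show "\<bar>T $ i $ i\<bar> \<le> 1 + (\<Sum>i\<in>UNIV. \<bar>T $ i $ i\<bar>)" for i
    using member_le_sum[of i UNIV "\<lambda>i. \<bar>T $ i $ i\<bar>"] by simp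
qed

lemma uniformisation_stochastic:
  assumes gen: "is_generator T" and c: "c > 0" "\<forall>i. \<bar>T $ i $ i\<bar> \<le> c"
  shows "0 \<le> mat 1 + (1 / c) *\<^sub>R T" and "(mat 1 + (1 / c) *\<^sub>R T) *v 1 = 1"
proof -
  have "0 \<le> (if i = j then 1 else 0) + T $ i $ j / c" for i j
  proof (cases "i = j")
    case True
    have "- c \<le> T $ i $ i" using c(2) by (metis abs_le_iff minus_le_iff)
    then show ?thesis using True c(1) by (simp add: field_simps)
  next
    case False
    then show ?thesis using gen c(1) by (simp add: is_generator_def)
  qed
  then show "0 \<le> mat 1 + (1 / c) *\<^sub>R T"
    by (simp add: matrix_le_iff mat_def)
  show "(mat 1 + (1 / c) *\<^sub>R T) *v 1 = 1"
    using gen by (simp add: vec_eq_iff matrix_vector_mult_add_rdistrib matrix_vector_mult_entry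
        is_generator_def scaleR_matrix_vector_assoc sum_divide_distrib[symmetric])
qed

definition riccati_residual ::
    "real^('p::finite + 'm::finite)^('p + 'm) \<Rightarrow> real^'m^'p \<Rightarrow> real^'m^'p" where
  "riccati_residual T X = blk_pm T + X ** blk_mm T + blk_pp T ** X + X ** blk_mp T ** X"

lemma riccati_iff_residual: "riccati T X \<longleftrightarrow> riccati_residual T X = 0"
  by (simp add: riccati_def riccati_residual_def)

lemma riccati_residual_uniformised:
  "riccati_residual (mat 1 + c *\<^sub>R T) X = 2 *\<^sub>R X + c *\<^sub>R riccati_residual T X"
  unfolding riccati_residual_def scaleR_2
  by (simp add: matrix_add_ldistrib matrix_add_rdistrib matrix_scalar_ac
      scalar_matrix_assoc[symmetric] algebra_simps)

definition riccati_step ::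
    "real^('p::finite + 'm::finite)^('p + 'm) \<Rightarrow> real^'m^'p \<Rightarrow> real^'m^'p" where
  "riccati_step P X = (1 / 2) *\<^sub>R riccati_residual P X"

lemma riccati_step_uniformised:
  "riccati_step (mat 1 + (1 / c) *\<^sub>R T) X = X + (1 / (2 * c)) *\<^sub>R riccati_residual T X"
  by (simp add: riccati_step_def riccati_residual_uniformised scaleR_add_right)

lemma riccati_step_mono:
  fixes P :: "real^('p::finite + 'm::finite)^('p + 'm)"
  assumes P: "0 \<le> P"
  shows "mono_on {0..} (riccati_step P)"
proof (rule mono_onI)
  fix X Y :: "real^'m^'p" assume "X \<in> {0..}" "Y \<in> {0..}" and XY: "X \<le> Y"
  then have X: "0 \<le> X" and Y: "0 \<le> Y" by auto
  note Pb = blk_nonneg[OF P]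
  have "X ** blk_mp P ** X \<le> X ** blk_mp P ** Y"
    by (rule matrix_mult_left_mono[OF matrix_mult_nonneg[OF X Pb(3)] XY])
  also have "\<dots> \<le> Y ** blk_mp P ** Y"
    by (rule matrix_mult_right_mono[OF matrix_mult_right_mono[OF XY Pb(3)] Y])
  finally have "riccati_residual P X \<le> riccati_residual P Y"
    unfolding riccati_residual_def
    by (intro add_mono order.refl matrix_mult_right_mono[OF XY Pb(4)]
        matrix_mult_left_mono[OF Pb(1) XY])
  then show "riccati_step P X \<le> riccati_step P Y"
    by (simp add: riccati_step_def scaleR_left_mono)
qed

lemma riccati_step_zero_nonneg: "0 \<le> P \<Longrightarrow> 0 \<le> riccati_step P 0"
  by (simp add: riccati_step_def riccati_residual_def blk_nonneg scaleR_nonneg_nonneg)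

lemma tendsto_riccati_step:
  "X \<longlonglongrightarrow> L \<Longrightarrow> (\<lambda>k. riccati_step P (X k)) \<longlonglongrightarrow> riccati_step P L"
  unfolding riccati_step_def riccati_residual_def by (intro tendsto_intros)

lemma riccati_step_substochastic:
  assumes P: "0 \<le> P" "P *v 1 = 1" and X: "0 \<le> X" "X *v 1 \<le> 1"
  shows "riccati_step P X *v 1 \<le> 1"
proof -
  note Pb = blk_nonneg[OF P(1)] and rows = stochastic_blk_row_sums[OF P(2)]
  have "riccati_residual P X *v 1 = blk_pm P *v 1 + X *v (blk_mm P *v 1)
      + blk_pp P *v (X *v 1) + X *v (blk_mp P *v (X *v 1))"
    by (simp add: riccati_residual_def matrix_vector_mult_add_rdistrib matrix_vector_mul_assoc
        matrix_mul_assoc)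
  also have "\<dots> \<le> blk_pm P *v 1 + X *v (blk_mm P *v 1) + blk_pp P *v 1 + X *v (blk_mp P *v 1)"
    by (intro add_mono order.refl matrix_vector_mult_mono Pb X)
  also have "\<dots> = (blk_pp P *v 1 + blk_pm P *v 1) + X *v (blk_mp P *v 1 + blk_mm P *v 1)"
    by (simp add: matrix_vector_right_distrib algebra_simps)
  also have "\<dots> = 1 + X *v 1"
    by (simp add: rows)
  also have "\<dots> \<le> 1 + 1"
    using X(2) by (rule add_left_mono)
  finally show ?thesis
    by (simp add: riccati_step_def scaleR_matrix_vector_assoc[symmetric] less_eq_vec_def)
qed

lemma min_nonneg_sol_iteration:
  assumes gen: "is_generator T" and min: "is_min_nonneg_sol T Psi"
    and c: "c > 0" "\<forall>i. \<bar>T $ i $ i\<bar> \<le> c"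
  defines "P \<equiv> mat 1 + (1 / c) *\<^sub>R T"
  shows "(\<lambda>k. (riccati_step P ^^ k) 0) \<longlonglongrightarrow> Psi"
    and "\<And>Z. 0 \<le> Z \<Longrightarrow> riccati_step P Z \<le> Z \<Longrightarrow> Psi \<le> Z"
proof -
  have P: "0 \<le> P" unfolding P_def by (rule uniformisation_stochastic(1)[OF gen c])
  have Psi: "0 \<le> Psi" "riccati_residual T Psi = 0"
    using min by (simp_all add: is_min_nonneg_sol_def nonneg_mat_iff riccati_iff_residual)
  have step: "riccati_step P X = X + (1 / (2 * c)) *\<^sub>R riccati_residual T X" for X
    unfolding P_def by (rule riccati_step_uniformised)
  have Psi_fixed: "riccati_step P Psi = Psi"
    by (simp add: step Psi(2))
  obtain L where lim: "(\<lambda>k. (riccati_step P ^^ k) 0) \<longlonglongrightarrow> L" and fixed: "riccati_step P L = L"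
    and L: "0 \<le> L" and least: "\<And>Z. 0 \<le> Z \<Longrightarrow> riccati_step P Z \<le> Z \<Longrightarrow> L \<le> Z"
    using iterates_converge_to_least_prefixpoint[OF riccati_step_mono[OF P]
        riccati_step_zero_nonneg[OF P] tendsto_riccati_step Psi(1) eq_refl[OF Psi_fixed]]
    by blast
  have "riccati T L"
    using fixed c(1) by (simp add: step riccati_iff_residual)
  then have "Psi \<le> L"
    using min L by (auto simp: is_min_nonneg_sol_def nonneg_mat_iff matrix_le_iff)
  moreover have "L \<le> Psi"
    using least[OF Psi(1)] Psi_fixed by simp
  ultimately have "L = Psi" by simp
  then show "(\<lambda>k. (riccati_step P ^^ k) 0) \<longlonglongrightarrow> Psi"
    using lim by simp
  show "Psi \<le> Z" if "0 \<le> Z" "riccati_step P Z \<le> Z" for Z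
    using least[OF that] \<open>L = Psi\<close> by simp
qed

lemma min_nonneg_sol_le_supersolution:
  assumes gen: "is_generator T" and min: "is_min_nonneg_sol T Psi"
    and Z: "0 \<le> Z" "riccati_residual T Z \<le> 0"
  shows "Psi \<le> Z"
proof -
  obtain c where c: "c > 0" "\<forall>i. \<bar>T $ i $ i\<bar> \<le> c"
    using exists_uniformisation_rate by blast
  have "riccati_step (mat 1 + (1 / c) *\<^sub>R T) Z \<le> Z"
    using Z(2) c(1) by (simp add: riccati_step_uniformised scaleR_nonneg_nonpos)
  then show ?thesis
    by (rule min_nonneg_sol_iteration(2)[OF gen min c Z(1)])
qed

lemma min_nonneg_sol_row_sums:
  assumes gen: "is_generator T" and min: "is_min_nonneg_sol T Psi"
  shows "Psi *v 1 \<le> 1"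
proof -
  obtain c where c: "c > 0" "\<forall>i. \<bar>T $ i $ i\<bar> \<le> c"
    using exists_uniformisation_rate by blast
  define P where "P = mat 1 + (1 / c) *\<^sub>R T"
  note P = uniformisation_stochastic[OF gen c, folded P_def]
  have bound: "0 \<le> (riccati_step P ^^ k) 0 \<and> (riccati_step P ^^ k) 0 *v 1 \<le> 1" for k
  proof (induction k)
    case 0 then show ?case by (simp add: less_eq_vec_def)
  next
    case (Suc k) then show ?case
      using riccati_step_substochastic[OF P] iterates_nonneg[OF riccati_step_mono[OF P(1)]
          riccati_step_zero_nonneg[OF P(1)], of "Suc k"] by simp
  qed
  have "(\<lambda>k. (riccati_step P ^^ k) 0 *v 1) \<longlonglongrightarrow> Psi *v 1"
    using min_nonneg_sol_iteration(1)[OF gen min c, folded P_def] by (rule tendsto_matrix_vector_mult)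
  then show ?thesis
    by (rule LIMSEQ_le_bound) (use bound in blast)
qed

section \<open>First passages of a QBD with triangular blocks\<close>

context
  fixes A :: "real^'p::finite^'p" and B0 Bd :: "real^'m::finite^'p" and W :: "real^'m^'m"
begin

abbreviation C :: "int \<Rightarrow> real^('p + 'm)^('p + 'm)" where
  "C \<equiv> qbd_step (block_mat 0 Bd 0 W) (block_mat 0 B0 0 0) (block_mat A 0 0 0)"

lemma C_entries:
  "C d $ Inl a $ Inl b = (if d = 1 then A $ a $ b else 0)"
  "C d $ Inl a $ Inr e = (if d = -1 then Bd $ a $ e else if d = 0 then B0 $ a $ e else 0)"
  "C d $ Inr e $ Inl b = 0"
  "C d $ Inr e $ Inr f = (if d = -1 then W $ e $ f else 0)"
  by (simp_all add: qbd_step_def)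

text \<open>
  A path from level \<open>0\<close> in \<open>S\<^sub>+\<close> climbs \<open>j div 2\<close> levels and then enters \<open>S\<^sub>-\<close>,
  through \<open>Bd\<close> (one level down) if \<open>j\<close> is even and through \<open>B0\<close> if \<open>j\<close> is odd; after the
  following descent with \<open>W\<close> it is at time \<open>n\<close> and level \<open>k\<close> exactly when \<open>n + k = j\<close>.
\<close>

definition exit_block :: "nat \<Rightarrow> real^'m^'p" where
  "exit_block j = matrix_power A (j div 2) ** (if even j then Bd else B0)"

definition taboo_pm :: "nat \<Rightarrow> nat \<Rightarrow> real^'m^'p" where
  "taboo_pm n k =
     (if k < n then exit_block (n + k) ** matrix_power W (n - Suc ((n + k) div 2)) else 0)"

definition first_passage_pm :: "nat \<Rightarrow> real^'m^'p" where
  "first_passage_pm n = exit_block n ** matrix_power W (n - n div 2)"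

lemma taboo_pm_Suc:
  "taboo_pm (Suc n) k = (if Suc k = n then matrix_power A n ** Bd else 0)
     + (if k = n then matrix_power A n ** B0 else 0) + taboo_pm n (Suc k) ** W"
proof -
  consider "Suc k < n" | "Suc k = n" | "k = n" | "n < k" by linarith
  then show ?thesis
  proof cases
    case 1
    then have "n - Suc (n + k) div 2 = Suc (n - Suc (Suc (n + k) div 2))"
      by presburger
    then show ?thesis
      using 1 by (simp add: taboo_pm_def matrix_power_Suc_right matrix_mul_assoc
          del: matrix_power.simps(2))
  next
    case 2
    then have "even (Suc n + k)" "(Suc n + k) div 2 = n" by presburger+
    then show ?thesis
      using 2 by (simp add: taboo_pm_def exit_block_def)
  next
    case 3
    then have "odd (Suc n + k)" "(Suc n + k) div 2 = n" by presburger+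
    then show ?thesis
      using 3 by (simp add: taboo_pm_def exit_block_def)
  qed (simp add: taboo_pm_def)
qed

lemma taboo_from_plus:
  "qbd_taboo C n (Inl p0) k (Inl p) = (if k = n then matrix_power A n $ p0 $ p else 0) \<and>
   qbd_taboo C n (Inl p0) k (Inr q) = taboo_pm n k $ p0 $ q"
proof (induction n arbitrary: k p q)
  case 0
  then show ?case by (simp add: mat_def taboo_pm_def)
next
  case (Suc n)
  have step: "qbd_taboo C (Suc n) (Inl p0) k j =
      (\<Sum>k'\<le>n. (\<Sum>a\<in>UNIV. (if k' = n then matrix_power A n $ p0 $ a else 0)
          * C (int k - int k') $ Inl a $ j)
        + (\<Sum>b\<in>UNIV. taboo_pm n k' $ p0 $ b * C (int k - int k') $ Inr b $ j))" for j
    by (simp add: sum_UNIV_Plus Suc.IH)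
  have "qbd_taboo C (Suc n) (Inl p0) k (Inl p) =
      (\<Sum>k'\<le>n. if k' = n then (if k = Suc n then (matrix_power A n ** A) $ p0 $ p else 0) else 0)"
    unfolding step C_entries
    by (intro sum.cong refl) (auto simp: matrix_mult_entry)
  moreover have "qbd_taboo C (Suc n) (Inl p0) k (Inr q) =
      (\<Sum>k'\<le>n. (if k' = n then ((if Suc k = n then matrix_power A n ** Bd else 0)
          + (if k = n then matrix_power A n ** B0 else 0)) $ p0 $ q else 0)
        + (if k' = Suc k then (taboo_pm n k' ** W) $ p0 $ q else 0))"
    unfolding step C_entries
    by (intro sum.cong refl arg_cong2[where f = "(+)"]) (auto simp: matrix_mult_entry)
  ultimately show ?case
    by (simp add: sum.distrib matrix_power_Suc_right taboo_pm_Suc taboo_pm_def[of n "Suc k"]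
        del: matrix_power.simps(2))
qed

lemma taboo_from_minus: "qbd_taboo C (Suc n) (Inr e) k j = 0"
proof (induction n arbitrary: k j)
  case 0
  show ?case by (cases j) (simp_all add: sum_UNIV_Plus C_entries)
next
  case (Suc n)
  then show ?case
    by (simp del: qbd_taboo.simps(2) add: qbd_taboo.simps(2)[of _ "Suc n"])
qed

lemma first_passage_pm_from_taboo:
  "(if n = 0 then Bd else 0) + taboo_pm n 0 ** W = first_passage_pm n"
proof (cases "n = 0")
  case False
  then have "n - n div 2 = Suc (n - Suc (n div 2))" by presburger
  then show ?thesis
    using False by (simp add: taboo_pm_def first_passage_pm_def matrix_power_Suc_right
        matrix_mul_assoc del: matrix_power.simps(2))
qed (simp add: taboo_pm_def first_passage_pm_def exit_block_def)

lemma first_passage_from_plus: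
  "qbd_first_passage C n (Inl p0) (Inl p) = 0"
  "qbd_first_passage C n (Inl p0) (Inr q) = first_passage_pm n $ p0 $ q"
proof -
  show "qbd_first_passage C n (Inl p0) (Inl p) = 0"
    by (simp add: qbd_first_passage_def sum_UNIV_Plus C_entries)
  have "qbd_first_passage C n (Inl p0) (Inr q) =
      (\<Sum>a\<in>UNIV. (if 0 = n then matrix_power A n $ p0 $ a else 0) * Bd $ a $ q)
      + (taboo_pm n 0 ** W) $ p0 $ q"
    by (simp add: qbd_first_passage_def sum_UNIV_Plus C_entries taboo_from_plus matrix_mult_entry)
  also have "\<dots> = ((if n = 0 then Bd else 0) + taboo_pm n 0 ** W) $ p0 $ q"
  proof (cases "n = 0")
    case True
    have "(\<Sum>a\<in>UNIV. matrix_power A 0 $ p0 $ a * Bd $ a $ q) = (matrix_power A 0 ** Bd) $ p0 $ q"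
      by (rule matrix_mult_entry[symmetric])
    then show ?thesis using True by simp
  qed simp
  finally show "qbd_first_passage C n (Inl p0) (Inr q) = first_passage_pm n $ p0 $ q"
    by (simp add: first_passage_pm_from_taboo)
qed

lemma first_passage_from_minus:
  "qbd_first_passage C n (Inr e) j = (if n = 0 then C (-1) $ Inr e $ j else 0)"
proof (cases n)
  case 0
  then show ?thesis
    by (simp add: qbd_first_passage_def sum_UNIV_Plus if_distrib if_distribR cong: if_cong)
next
  case (Suc n')
  then show ?thesis
    by (simp add: qbd_first_passage_def taboo_from_minus del: qbd_taboo.simps(2))
qed

lemma qbd_G_triangular:
  "qbd_G (block_mat 0 Bd 0 W) (block_mat 0 B0 0 0) (block_mat A 0 0 0) =
     block_mat 0 (\<chi> p q. \<Sum>n. first_passage_pm n $ p $ q) 0 W"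
proof -
  have "qbd_G (block_mat 0 Bd 0 W) (block_mat 0 B0 0 0) (block_mat A 0 0 0) $ i $ j =
      block_mat 0 (\<chi> p q. \<Sum>n. first_passage_pm n $ p $ q) 0 W $ i $ j" for i j
  proof (cases i)
    case (Inl p0)
    then show ?thesis
      by (cases j) (simp_all add: qbd_G_def first_passage_from_plus)
  next
    case (Inr e)
    have "(\<lambda>n. qbd_first_passage C n (Inr e) j) sums C (-1) $ Inr e $ j"
      unfolding first_passage_from_minus using sums_single[of 0 "\<lambda>_. C (-1) $ Inr e $ j"]
      by (simp add: eq_commute)
    then show ?thesis
      using Inr by (cases j) (simp_all add: qbd_G_def qbd_step_def sums_iff)
  qed
  then show ?thesis by (simp add: vec_eq_iff)
qed

lemma first_passage_pm_pairs:
  "first_passage_pm (2 * m) + first_passage_pm (2 * m + 1) =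
     matrix_power A m ** (Bd + B0 ** W) ** matrix_power W m"
  by (simp add: first_passage_pm_def exit_block_def matrix_add_ldistrib matrix_add_rdistrib
      matrix_mul_assoc)

end

section \<open>The uniformised fluid queue\<close>

locale uniformised_fluid_queue =
  fixes T :: "real^('p::finite + 'm::finite)^('p + 'm)" and Psi :: "real^'m^'p" and lam mu :: real
  assumes gen: "is_generator T" and Psi_min: "is_min_nonneg_sol T Psi"
    and lam_pos: "lam > 0" and mu_pos: "mu > 0"
    and lam_ge: "\<forall>i. \<bar>T $ i $ i\<bar> \<le> lam" and mu_ge: "\<forall>i. \<bar>T $ i $ i\<bar> \<le> mu"
begin

definition "U = blk_mm T + blk_mp T ** Psi"
definition "W = (mat 1 + (1 / mu) *\<^sub>R U) ** matrix_inv (mat 1 - (1 / lam) *\<^sub>R U)"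
definition "M = matrix_inv (mat 1 - (1 / mu) *\<^sub>R blk_pp T)"

definition "C1pp = M ** blk_pp (mat 1 + (1 / lam) *\<^sub>R T)"
definition "C0pm = M ** blk_pm (mat 1 + (1 / lam) *\<^sub>R T)"
definition "Cmpm = M ** blk_pm (mat 1 + (1 / mu) *\<^sub>R T)"

lemma Psi_nonneg: "0 \<le> Psi"
  using Psi_min by (simp add: is_min_nonneg_sol_def nonneg_mat_iff)

lemma Psi_residual: "riccati_residual T Psi = 0"
  using Psi_min by (simp add: is_min_nonneg_sol_def riccati_iff_residual)

lemma T_offdiag_nonneg: "i \<noteq> j \<Longrightarrow> 0 \<le> T $ i $ j"
  using gen by (simp add: is_generator_def)

lemma T_row_sums: "T *v 1 = 0"
  using gen by (simp add: is_generator_def vec_eq_iff matrix_vector_mult_entry)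

lemma Tpm_nonneg: "0 \<le> blk_pm T" and Tmp_nonneg: "0 \<le> blk_mp T"
  by (simp_all add: matrix_le_iff T_offdiag_nonneg)

lemma U_offdiag_nonneg: "i \<noteq> j \<Longrightarrow> 0 \<le> U $ i $ j"
  using matrix_mult_nonneg[OF Tmp_nonneg Psi_nonneg] T_offdiag_nonneg[of "Inr i" "Inr j"]
  by (simp add: U_def matrix_le_iff)

lemma U_diag_lower: "- mu \<le> U $ i $ i"
proof -
  have "0 \<le> (blk_mp T ** Psi) $ i $ i"
    using matrix_mult_nonneg[OF Tmp_nonneg Psi_nonneg] by (simp add: matrix_le_iff)
  moreover have "- mu \<le> T $ Inr i $ Inr i"
    using mu_ge by (metis abs_le_iff minus_le_iff)
  ultimately show ?thesis by (simp add: U_def)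
qed

lemma U_row_sums: "U *v 1 \<le> 0"
proof -
  have "U *v 1 = blk_mm T *v 1 + blk_mp T *v (Psi *v 1)"
    by (simp add: U_def matrix_vector_mult_add_rdistrib matrix_vector_mul_assoc)
  also have "\<dots> \<le> blk_mm T *v 1 + blk_mp T *v 1"
    using Tmp_nonneg min_nonneg_sol_row_sums[OF gen Psi_min]
    by (intro add_left_mono matrix_vector_mult_mono)
  also have "\<dots> = 0"
  proof -
    have "(blk_mp T *v 1) $ e + (blk_mm T *v 1) $ e = 0" for e
      using blk_row_sums(2)[of T e] T_row_sums by simp
    then show ?thesis by (simp add: vec_eq_iff add.commute)
  qed
  finally show ?thesis .
qed

lemma I_minus_U_inverse:
  "invertible (mat 1 - (1 / lam) *\<^sub>R U)" "0 \<le> matrix_inv (mat 1 - (1 / lam) *\<^sub>R U)"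
proof -
  have "0 < ((mat 1 - (1 / lam) *\<^sub>R U) *v 1) $ i" for i
  proof -
    have "(U *v 1) $ i \<le> 0" using U_row_sums by (simp add: less_eq_vec_def)
    then have "(U *v 1) $ i / lam \<le> 0" using lam_pos by (simp add: divide_nonpos_pos)
    then show ?thesis
      by (simp add: matrix_vector_mult_diff_rdistrib scaleR_matrix_vector_assoc[symmetric])
  qed
  moreover have "(mat 1 - (1 / lam) *\<^sub>R U) $ i $ j \<le> 0" if "i \<noteq> j" for i j
    using U_offdiag_nonneg[OF that] lam_pos that by (simp add: mat_def)
  ultimately show "invertible (mat 1 - (1 / lam) *\<^sub>R U)"
    "0 \<le> matrix_inv (mat 1 - (1 / lam) *\<^sub>R U)"
    using Z_matrix_inverse_nonneg by blast+
qed

lemma I_minus_Tpp_inverse: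
  "invertible (mat 1 - (1 / mu) *\<^sub>R blk_pp T)" "0 \<le> M"
proof -
  have "0 < ((mat 1 - (1 / mu) *\<^sub>R blk_pp T) *v 1) $ i" for i
  proof -
    have "(blk_pp T *v 1) $ i = - (blk_pm T *v 1) $ i"
      using blk_row_sums(1)[of T i] T_row_sums by simp
    moreover have "0 \<le> (blk_pm T *v 1) $ i / mu"
      using matrix_vector_mult_mono[OF Tpm_nonneg, of 0 1] mu_pos by (simp add: less_eq_vec_def)
    ultimately show ?thesis
      by (simp add: matrix_vector_mult_diff_rdistrib scaleR_matrix_vector_assoc[symmetric])
  qed
  moreover have "(mat 1 - (1 / mu) *\<^sub>R blk_pp T) $ i $ j \<le> 0" if "i \<noteq> j" for i j
    using T_offdiag_nonneg[of "Inl i" "Inl j"] mu_pos that by (simp add: mat_def)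
  ultimately show "invertible (mat 1 - (1 / mu) *\<^sub>R blk_pp T)" "0 \<le> M"
    unfolding M_def using Z_matrix_inverse_nonneg by blast+
qed

lemma W_nonneg: "0 \<le> W"
proof -
  have "0 \<le> mat 1 + (1 / mu) *\<^sub>R U"
  proof -
    have "0 \<le> (if i = j then 1 else 0) + U $ i $ j / mu" for i j
      using U_diag_lower[of i] U_offdiag_nonneg[of i j] mu_pos by (auto simp: field_simps)
    then show ?thesis by (simp add: matrix_le_iff mat_def)
  qed
  then show ?thesis
    unfolding W_def by (rule matrix_mult_nonneg[OF _ I_minus_U_inverse(2)])
qed

lemma C_blocks_nonneg: "0 \<le> C1pp" "0 \<le> C0pm" "0 \<le> Cmpm"
proof -
  note Plam = uniformisation_stochastic(1)[OF gen lam_pos lam_ge]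
    and Pmu = uniformisation_stochastic(1)[OF gen mu_pos mu_ge]
  show "0 \<le> C1pp" unfolding C1pp_def
    by (rule matrix_mult_nonneg[OF I_minus_Tpp_inverse(2) blk_nonneg(1)[OF Plam]])
  show "0 \<le> C0pm" unfolding C0pm_def
    by (rule matrix_mult_nonneg[OF I_minus_Tpp_inverse(2) blk_nonneg(2)[OF Plam]])
  show "0 \<le> Cmpm" unfolding Cmpm_def
    by (rule matrix_mult_nonneg[OF I_minus_Tpp_inverse(2) blk_nonneg(2)[OF Pmu]])
qed

text \<open>The \<open>S\<^sub>+ \<times> S\<^sub>-\<close> block of \<open>G = C\<^sub>-\<^sub>1 + C\<^sub>0 G + C\<^sub>1 G\<^sup>2\<close> for \<open>G = [[0, X], [0, W]]\<close>.\<close>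

definition Gpm_map :: "real^'m^'p \<Rightarrow> real^'m^'p" where
  "Gpm_map X = Cmpm + C0pm ** W + C1pp ** X ** W"

lemma Gpm_map_residual:
  "(mat 1 - (1 / mu) *\<^sub>R blk_pp T) ** (Gpm_map X - X) ** (mat 1 - (1 / lam) *\<^sub>R U) =
     (1 / lam + 1 / mu) *\<^sub>R (blk_pm T + X ** U + blk_pp T ** X)"
proof -
  let ?Mi = "mat 1 - (1 / mu) *\<^sub>R blk_pp T" and ?Ni = "mat 1 - (1 / lam) *\<^sub>R U"
  have Mi_G: "?Mi ** Gpm_map X = (1 / mu) *\<^sub>R blk_pm T + ((1 / lam) *\<^sub>R blk_pm T) ** W
      + (mat 1 + (1 / lam) *\<^sub>R blk_pp T) ** X ** W"
    using matrix_inv_right[OF I_minus_Tpp_inverse(1)]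
    by (simp add: Gpm_map_def C1pp_def C0pm_def Cmpm_def M_def matrix_add_ldistrib matrix_mul_assoc)
  have W_Ni: "Z ** W ** ?Ni = Z ** (mat 1 + (1 / mu) *\<^sub>R U)" for Z :: "real^'m^'p"
    using matrix_inv_left[OF I_minus_U_inverse(1)] by (simp add: W_def matrix_mul_assoc[symmetric])
  have "?Mi ** (Gpm_map X - X) ** ?Ni = ?Mi ** Gpm_map X ** ?Ni - ?Mi ** X ** ?Ni"
    by (simp add: matrix_diff_ldistrib matrix_diff_rdistrib)
  also have "\<dots> = ((1 / mu) *\<^sub>R blk_pm T) ** ?Ni
      + ((1 / lam) *\<^sub>R blk_pm T) ** (mat 1 + (1 / mu) *\<^sub>R U)
      + (mat 1 + (1 / lam) *\<^sub>R blk_pp T) ** X ** (mat 1 + (1 / mu) *\<^sub>R U) - ?Mi ** X ** ?Ni"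
    unfolding Mi_G matrix_add_rdistrib W_Ni ..
  also have "\<dots> = (1 / lam + 1 / mu) *\<^sub>R (blk_pm T + X ** U + blk_pp T ** X)"
    using lam_pos mu_pos
    by (simp add: matrix_diff_ldistrib matrix_diff_rdistrib matrix_add_ldistrib matrix_add_rdistrib
        matrix_scalar_ac scalar_matrix_assoc[symmetric] matrix_mul_assoc vec_eq_iff field_simps)
  finally show ?thesis .
qed

lemma Gpm_map_fixpoint_iff: "Gpm_map X = X \<longleftrightarrow> blk_pm T + X ** U + blk_pp T ** X = 0"
proof
  assume "Gpm_map X = X"
  then have "(1 / lam + 1 / mu) *\<^sub>R (blk_pm T + X ** U + blk_pp T ** X) = 0"
    using Gpm_map_residual[of X] by simp
  moreover have "0 < 1 / lam + 1 / mu"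
    using lam_pos mu_pos by (simp add: add_pos_pos)
  ultimately show "blk_pm T + X ** U + blk_pp T ** X = 0" by simp
next
  assume "blk_pm T + X ** U + blk_pp T ** X = 0"
  then have "(mat 1 - (1 / mu) *\<^sub>R blk_pp T) ** (Gpm_map X - X) ** (mat 1 - (1 / lam) *\<^sub>R U) = 0"
    by (simp add: Gpm_map_residual)
  let ?Mi = "mat 1 - (1 / mu) *\<^sub>R blk_pp T" and ?Ni = "mat 1 - (1 / lam) *\<^sub>R U"
  have "Gpm_map X - X = M ** ?Mi ** (Gpm_map X - X) ** (?Ni ** matrix_inv ?Ni)"
    by (simp add: M_def matrix_inv_left[OF I_minus_Tpp_inverse(1)]
        matrix_inv_right[OF I_minus_U_inverse(1)])
  also have "\<dots> = M ** (?Mi ** (Gpm_map X - X) ** ?Ni) ** matrix_inv ?Ni"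
    by (simp add: matrix_mul_assoc)
  finally show "Gpm_map X = X"
    using \<open>?Mi ** (Gpm_map X - X) ** ?Ni = 0\<close> by simp
qed

lemma Gpm_map_Psi: "Gpm_map Psi = Psi"
proof -
  have "blk_pm T + Psi ** U + blk_pp T ** Psi = riccati_residual T Psi"
    by (simp add: riccati_residual_def U_def matrix_add_ldistrib matrix_mul_assoc algebra_simps)
  then show ?thesis
    by (simp add: Gpm_map_fixpoint_iff Psi_residual)
qed

lemma Gpm_map_mono: "mono_on {0..} Gpm_map"
  by (intro mono_onI)
    (simp add: Gpm_map_def add_left_mono matrix_mult_right_mono[OF matrix_mult_left_mono]
      C_blocks_nonneg W_nonneg)

lemma Gpm_map_iterates:
  "(Gpm_map ^^ N) 0 = (\<Sum>m<N. matrix_power C1pp m ** (Cmpm + C0pm ** W) ** matrix_power W m)"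
proof (induction N)
  case (Suc N)
  have shift: "C1pp ** (matrix_power C1pp m ** Z ** matrix_power W m) ** W =
      matrix_power C1pp (Suc m) ** Z ** matrix_power W (Suc m)" for m and Z :: "real^'m^'p"
    by (simp only: matrix_power.simps(2)[of C1pp] matrix_power_Suc_right[of W] matrix_mul_assoc)
  show ?case
    unfolding sum.lessThan_Suc_shift using Suc.IH
    by (simp add: Gpm_map_def matrix_mult_sum_left matrix_mult_sum_right sum.lessThan_Suc_shift
        shift del: matrix_power.simps(2))
qed simp

lemma Gpm_map_iterates_tendsto: "(\<lambda>N. (Gpm_map ^^ N) 0) \<longlonglongrightarrow> Psi"
proof -
  have "0 \<le> Gpm_map 0"
    by (simp add: Gpm_map_def C_blocks_nonneg W_nonneg matrix_mult_nonneg)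
  moreover have "(\<lambda>k. Gpm_map (X k)) \<longlonglongrightarrow> Gpm_map L" if "X \<longlonglongrightarrow> L" for X L
    unfolding Gpm_map_def by (intro tendsto_intros that)
  ultimately obtain L where lim: "(\<lambda>N. (Gpm_map ^^ N) 0) \<longlonglongrightarrow> L" and fixed: "Gpm_map L = L"
    and L: "0 \<le> L" "L \<le> Psi"
    using iterates_converge_to_least_prefixpoint[OF Gpm_map_mono _ _ Psi_nonneg]
      Gpm_map_Psi Psi_nonneg by (metis order.refl)
  have "riccati_residual T L = (blk_pm T + L ** U + blk_pp T ** L) + L ** blk_mp T ** (L - Psi)"
    by (simp add: riccati_residual_def U_def matrix_add_ldistrib matrix_diff_ldistrib
        matrix_mul_assoc algebra_simps)
  also have "\<dots> = L ** blk_mp T ** (L - Psi)"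
    using fixed by (simp add: Gpm_map_fixpoint_iff)
  also have "\<dots> \<le> 0"
    using matrix_mult_left_mono[OF matrix_mult_nonneg[OF L(1) Tmp_nonneg], of "L - Psi" 0] L(2)
    by simp
  finally have "Psi \<le> L"
    by (rule min_nonneg_sol_le_supersolution[OF gen Psi_min L(1)])
  then show ?thesis
    using lim L(2) by simp
qed

lemma first_passage_pm_sums:
  "(\<lambda>n. first_passage_pm C1pp C0pm Cmpm W n $ p $ q) sums Psi $ p $ q"
proof (rule nonneg_sums_of_pairs)
  have "0 \<le> first_passage_pm C1pp C0pm Cmpm W n" for n
    using C_blocks_nonneg W_nonneg
    by (auto simp: first_passage_pm_def exit_block_def intro!: matrix_mult_nonneg matrix_power_nonneg)
  then show "0 \<le> first_passage_pm C1pp C0pm Cmpm W n $ p $ q" for n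
    by (simp add: matrix_le_iff)
  have "(\<lambda>N. (\<Sum>m<N. matrix_power C1pp m ** (Cmpm + C0pm ** W) ** matrix_power W m) $ p $ q)
      \<longlonglongrightarrow> Psi $ p $ q"
    using Gpm_map_iterates_tendsto unfolding Gpm_map_iterates by (intro tendsto_vec_nth)
  then show "(\<lambda>m. first_passage_pm C1pp C0pm Cmpm W (2 * m) $ p $ q
      + first_passage_pm C1pp C0pm Cmpm W (2 * m + 1) $ p $ q) sums Psi $ p $ q"
    by (simp add: sums_def first_passage_pm_pairs[symmetric] sum_component)
qed

lemma qbd_G_eq:
  "qbd_G (block_mat 0 Cmpm 0 W) (block_mat 0 C0pm 0 0) (block_mat C1pp 0 0 0) = block_mat 0 Psi 0 W"
proof -
  have "(\<chi> p q. \<Sum>n. first_passage_pm C1pp C0pm Cmpm W n $ p $ q) = Psi"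
    using first_passage_pm_sums by (simp add: vec_eq_iff sums_iff)
  then show ?thesis
    by (simp add: qbd_G_triangular)
qed

end

theorem lemma3:
  fixes T :: "real^('p::finite + 'm::finite)^('p + 'm)"
    and Psi :: "real^'m^'p"
    and lam mu :: real
  assumes gen: "is_generator T"
    and Psi: "is_min_nonneg_sol T Psi"
    and lam_pos: "lam > 0" and mu_pos: "mu > 0"
    and lam_ge: "\<forall>i. \<bar>T $ i $ i\<bar> \<le> lam"
    and mu_ge: "\<forall>i. \<bar>T $ i $ i\<bar> \<le> mu"
  defines "U \<equiv> blk_mm T + blk_mp T ** Psi"
    and "P_lam \<equiv> mat 1 + (1 / lam) *\<^sub>R T"
    and "P_mu \<equiv> mat 1 + (1 / mu) *\<^sub>R T"
  defines "W \<equiv> (mat 1 + (1 / mu) *\<^sub>R U) ** matrix_inv (mat 1 - (1 / lam) *\<^sub>R U)"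
    and "M \<equiv> matrix_inv (mat 1 - (1 / mu) *\<^sub>R blk_pp T)"
  defines "Cm \<equiv> block_mat 0 (M ** blk_pm P_mu) 0 W"
    and "C0 \<equiv> block_mat 0 (M ** blk_pm P_lam) 0 0"
    and "C1 \<equiv> block_mat (M ** blk_pp P_lam) 0 0 0"
  shows "qbd_G Cm C0 C1 = block_mat 0 Psi 0 W"
proof -
  interpret F: uniformised_fluid_queue T Psi lam mu
    by unfold_locales (use gen Psi lam_pos mu_pos lam_ge mu_ge in auto)
  show ?thesis
    using F.qbd_G_eq
    unfolding assms(7-14) F.C1pp_def F.C0pm_def F.Cmpm_def F.W_def F.M_def F.U_def .
qed

end
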